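(* Let $F,G$ be non-constant functions analytic in some complex neighborhood of $0$, such that neither the curve of $F$ nor the curve of $G$ bounces back at zero. If $F,G$ roughly agree to the right of zero, then $F,G$ share a curve around zero.
   Context: $\Sigma_0$ denotes the collection of open intervals in $\mathbb R$ containing $0$; for $\mathcal I\in\Sigma_0$ put $\mathcal I^+:=\mathcal I\cap[0,\infty)$, $\mathcal I^-:=\mathcal I\cap(-\infty,0]$. "There are arbitrarily short intervals with property P" means: for every $\varepsilon>0$ there are such intervals of length less than $\varepsilon$. The curve of $F$ bounces back at zero if there are arbitrarily short $\mathcal I\in\Sigma_0$ with $F(\mathcal I^+)=F(\mathcal I^-)$. $F,G$ share a curve around zero if there are arbitrarily short $\mathcal I,\mathcal J\in\Sigma_0$ with $F(\mathcal I)=G(\mathcal J)$. $F,G$ roughly agree to the right of zero if there are sequences $(u_k)_{k\ge1},(v_k)_{k\ge1}$ of positive real numbers with $u_k\to0^+$, $v_k\to0^+$ and $F(u_k)=G(v_k)$ for all $k\ge1$. *)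

theory Defs
  imports "HOL-Analysis.Analysis"
begin

text \<open>The curve of F: its restriction to the real line, F(t) for real t.\<close>

definition bounces_back_at_zero :: "(complex \<Rightarrow> complex) \<Rightarrow> bool" where
  "bounces_back_at_zero F \<longleftrightarrow>
     (\<forall>\<epsilon>>0. \<exists>a b::real. a < 0 \<and> 0 < b \<and> b - a < \<epsilon> \<and>
        (\<lambda>t. F (complex_of_real t)) ` {0..<b} = (\<lambda>t. F (complex_of_real t)) ` {a<..0})"

definition share_curve_around_zero :: "(complex \<Rightarrow> complex) \<Rightarrow> (complex \<Rightarrow> complex) \<Rightarrow> bool" where
  "share_curve_around_zero F G \<longleftrightarrow>
     (\<forall>\<epsilon>>0. \<exists>a b c d::real. a < 0 \<and> 0 < b \<and> b - a < \<epsilon> \<and> c < 0 \<and> 0 < d \<and> d - c < \<epsilon> \<and>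
        (\<lambda>t. F (complex_of_real t)) ` {a<..<b} = (\<lambda>t. G (complex_of_real t)) ` {c<..<d})"

definition roughly_agree_right :: "(complex \<Rightarrow> complex) \<Rightarrow> (complex \<Rightarrow> complex) \<Rightarrow> bool" where
  "roughly_agree_right F G \<longleftrightarrow>
     (\<exists>u v :: nat \<Rightarrow> real. (\<forall>k. 0 < u k \<and> 0 < v k) \<and> u \<longlonglongrightarrow> 0 \<and> v \<longlonglongrightarrow> 0 \<and>
        (\<forall>k. F (complex_of_real (u k)) = G (complex_of_real (v k))))"

end

theory Submission
  imports Defs "HOL-Complex_Analysis.Complex_Analysis"
begin

text \<open>
  Near 0 write \<open>F z = c + z ^ n * A z\<close> and \<open>G z = c + z ^ m * B z\<close> with \<open>A\<close>, \<open>B\<close> zero-free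
  (the constants agree because \<open>F\<close> and \<open>G\<close> take equal values along sequences tending to 0).
  Up to exchanging \<open>F\<close> and \<open>G\<close> there are \<open>k\<close> odd and \<open>q\<close> with \<open>n k = m q\<close>. Extracting
  \<open>m\<close>-th roots gives \<open>F (z ^ k) = c + p z ^ m\<close> and \<open>G z = c + h z ^ m\<close> with \<open>h\<close> locally
  biholomorphic and \<open>h 0 = 0\<close>, hence \<open>F (z ^ k) = G (\<phi> z)\<close> for \<open>\<phi> = h\<^sup>-\<^sup>1 \<circ> (w \<cdot> p)\<close>, where the
  \<open>m\<close>-th root of unity \<open>w\<close> is chosen so that \<open>\<phi>\<close> maps infinitely many of the points
  \<open>u\<^sub>j\<^sup>1\<^sup>/\<^sup>k\<close> to \<open>v\<^sub>j\<close>, where \<open>F (u\<^sub>j) = G (v\<^sub>j)\<close>. By the identity theorem \<open>\<phi>\<close> is real on the real axis; being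
  non-constant, it is strictly monotone on each side of 0, and increasing on the right. If it is
  increasing on the left as well, \<open>t \<mapsto> t ^ k\<close> and \<open>\<phi>\<close> identify small symmetric arcs of the two
  curves; if it is decreasing on the left, the curve of \<open>F\<close> bounces back at zero.
\<close>

section \<open>Curves of real functions\<close>

definition bounces_back_at_zero_real :: "(real \<Rightarrow> 'a) \<Rightarrow> bool" where
  "bounces_back_at_zero_real f \<longleftrightarrow>
     (\<forall>\<epsilon>>0. \<exists>a b. a < 0 \<and> 0 < b \<and> b - a < \<epsilon> \<and> f ` {0..<b} = f ` {a<..0})"

definition share_curve_around_zero_real :: "(real \<Rightarrow> 'a) \<Rightarrow> (real \<Rightarrow> 'a) \<Rightarrow> bool" where
  "share_curve_around_zero_real f g \<longleftrightarrow>
     (\<forall>\<epsilon>>0. \<exists>a b c d. a < 0 \<and> 0 < b \<and> b - a < \<epsilon> \<and> c < 0 \<and> 0 < d \<and> d - c < \<epsilon> \<and>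
        f ` {a<..<b} = g ` {c<..<d})"

lemma bounces_back_at_zero_iff_real:
  "bounces_back_at_zero F \<longleftrightarrow> bounces_back_at_zero_real (\<lambda>t. F (complex_of_real t))"
  unfolding bounces_back_at_zero_def bounces_back_at_zero_real_def ..

lemma share_curve_around_zero_iff_real:
  "share_curve_around_zero F G \<longleftrightarrow>
     share_curve_around_zero_real (\<lambda>t. F (complex_of_real t)) (\<lambda>t. G (complex_of_real t))"
  unfolding share_curve_around_zero_def share_curve_around_zero_real_def ..

lemma share_curve_around_zero_commute:
  "share_curve_around_zero F G \<Longrightarrow> share_curve_around_zero G F"
  unfolding share_curve_around_zero_def by (metis (no_types, lifting))

lemma continuous_strict_mono_on_image:
  fixes f :: "real \<Rightarrow> real"
  assumes "a \<le> b" "continuous_on {a..b} f" "strict_mono_on {a..b} f"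
  shows "f ` {a<..<b} = {f a<..<f b}" "f ` {a<..b} = {f a<..f b}" "f ` {a..<b} = {f a..<f b}"
proof -
  have Icc: "f ` {a..b} = {f a..f b}"
  proof
    show "f ` {a..b} \<subseteq> {f a..f b}"
      using strict_mono_on_leD[OF assms(3)] assms(1) by auto
    show "{f a..f b} \<subseteq> f ` {a..b}"
      using IVT'[of f a _ b] assms(1,2) by (fastforce simp: image_iff)
  qed
  have inj: "inj_on f {a..b}"
    by (rule strict_mono_on_imp_inj_on[OF assms(3)])
  have diff: "f ` ({a..b} - B) = {f a..f b} - f ` B" if "B \<subseteq> {a..b}" for B
    using inj_on_image_set_diff[OF inj _ that] Icc by simp
  have "{a<..<b} = {a..b} - {a, b}" "{a<..b} = {a..b} - {a}" "{a..<b} = {a..b} - {b}"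
    using assms(1) by auto
  moreover have "{f a<..<f b} = {f a..f b} - {f a, f b}" "{f a<..f b} = {f a..f b} - {f a}"
    "{f a..<f b} = {f a..f b} - {f b}"
    by auto
  ultimately show "f ` {a<..<b} = {f a<..<f b}" "f ` {a<..b} = {f a<..f b}" "f ` {a..<b} = {f a..<f b}"
    using diff[of "{a, b}"] diff[of "{a}"] diff[of "{b}"] assms(1) by simp_all
qed

lemma continuous_strict_antimono_on_image:
  fixes f :: "real \<Rightarrow> real"
  assumes "a \<le> b" "continuous_on {a..b} f" "strict_antimono_on {a..b} f"
  shows "f ` {a<..b} = {f b..<f a}"
proof -
  have "continuous_on {a..b} (\<lambda>x. - f x)"
    using assms(2) by (intro continuous_intros)
  moreover have "strict_mono_on {a..b} (\<lambda>x. - f x)"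
    using assms(3) by (simp add: monotone_on_def)
  ultimately have "(\<lambda>x. - f x) ` {a<..b} = {- f a<..- f b}"
    by (rule continuous_strict_mono_on_image(2)[of a b "\<lambda>x. - f x", OF assms(1)])
  then have "uminus ` (\<lambda>x. - f x) ` {a<..b} = {f b..<f a}"
    by simp
  then show ?thesis
    by (simp add: image_image)
qed

lemma strict_mono_on_join:
  fixes f :: "real \<Rightarrow> real"
  assumes "strict_mono_on {a<..c} f" "strict_mono_on {c..<b} f"
  shows "strict_mono_on {a<..<b} f"
proof (rule monotone_onI)
  fix x y assume xy: "x \<in> {a<..<b}" "y \<in> {a<..<b}" "x < y"
  consider "y \<le> c" | "c \<le> x" | "x < c" "c < y"
    by (meson not_le)
  then show "f x < f y"
  proof cases
    case 1
    then show ?thesis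
      using xy strict_mono_onD[OF assms(1), of x y] by auto
  next
    case 2
    then show ?thesis
      using xy strict_mono_onD[OF assms(2), of x y] by auto
  next
    case 3
    then have "f x < f c" "f c < f y"
      using xy strict_mono_onD[OF assms(1), of x c] strict_mono_onD[OF assms(2), of c y] by auto
    then show ?thesis
      by simp
  qed
qed

lemma strict_mono_odd_power:
  assumes "odd k"
  shows "strict_mono (\<lambda>x::real. x ^ k)"
  by (rule strict_monoI) (metis assms odd_pos odd_real_root_power_cancel real_root_less_iff)

lemma inj_on_if_deriv_nonzero:
  fixes f :: "real \<Rightarrow> real"
  assumes "is_interval S" "continuous_on S f"
    and deriv: "\<And>x. x \<in> interior S \<Longrightarrow> (f has_real_derivative f' x) (at x)"
    and nonzero: "\<And>x. x \<in> interior S \<Longrightarrow> f' x \<noteq> 0"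
  shows "inj_on f S"
proof (rule linorder_inj_onI')
  fix x y assume "x \<in> S" "y \<in> S" "x < y"
  have sub: "{x..y} \<subseteq> S"
    using mem_is_interval_1_I[OF assms(1) \<open>x \<in> S\<close> \<open>y \<in> S\<close>] by auto
  have inner: "{x<..<y} \<subseteq> interior S"
    using interior_mono[OF sub] by simp
  obtain l z where z: "x < z" "z < y" "(f has_real_derivative l) (at z)" "f y - f x = (y - x) * l"
    using MVT[OF \<open>x < y\<close> continuous_on_subset[OF assms(2) sub]] deriv inner
    by (metis greaterThanLessThan_iff real_differentiable_def subsetD)
  have "z \<in> interior S"
    using inner z(1,2) by auto
  then have "l \<noteq> 0"
    using DERIV_unique[OF z(3) deriv] nonzero by metis
  then have "(y - x) * l \<noteq> 0"
    using \<open>x < y\<close> by simp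
  then show "f x \<noteq> f y"
    using z(4) by auto
qed

lemma eventually_at_right_both_sides:
  fixes p :: "real \<Rightarrow> real"
  assumes "isCont p 0" "p 0 = 0" "0 < \<epsilon>"
  shows "\<forall>\<^sub>F x in at_right 0. \<bar>p x\<bar> < \<epsilon> \<and> \<bar>p (- x)\<bar> < \<epsilon>"
proof -
  have "isCont (\<lambda>x. p (- x)) 0"
    by (rule isCont_o2[where g = p]) (simp_all add: assms(1))
  then have "((\<lambda>x. \<bar>p x\<bar>) \<longlongrightarrow> 0) (at 0)" "((\<lambda>x. \<bar>p (- x)\<bar>) \<longlongrightarrow> 0) (at 0)"
    using assms(1,2) by (auto simp: isCont_def intro!: tendsto_eq_intros)
  then have "\<forall>\<^sub>F x in at 0. \<bar>p x\<bar> < \<epsilon> \<and> \<bar>p (- x)\<bar> < \<epsilon>"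
    using assms(3) by (auto intro: eventually_conj order_tendstoD(2))
  then show ?thesis
    by (rule eventually_at_split[THEN iffD1, THEN conjunct2])
qed

lemma share_curve_around_zero_real_reparam:
  fixes f g :: "real \<Rightarrow> 'a" and p r :: "real \<Rightarrow> real"
  assumes "0 < \<delta>" and eq: "\<And>s. s \<in> {-\<delta><..<\<delta>} \<Longrightarrow> f (p s) = g (r s)"
    and "continuous_on {-\<delta><..<\<delta>} p" "continuous_on {-\<delta><..<\<delta>} r" "p 0 = 0" "r 0 = 0"
    and p_mono: "strict_mono_on {-\<delta><..<\<delta>} p" and r_mono: "strict_mono_on {-\<delta><..<\<delta>} r"
  shows "share_curve_around_zero_real f g"
  unfolding share_curve_around_zero_real_def
proof (intro allI impI)
  fix \<epsilon> :: real assume "0 < \<epsilon>"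
  have "isCont p 0" "isCont r 0"
    using assms(1,3,4) by (auto simp: continuous_on_eq_continuous_at)
  then have "\<forall>\<^sub>F x in at_right 0. \<bar>p x\<bar> < \<epsilon>/2 \<and> \<bar>p (-x)\<bar> < \<epsilon>/2"
    "\<forall>\<^sub>F x in at_right 0. \<bar>r x\<bar> < \<epsilon>/2 \<and> \<bar>r (-x)\<bar> < \<epsilon>/2"
    using assms(5,6) \<open>0 < \<epsilon>\<close> eventually_at_right_both_sides[of p "\<epsilon>/2"]
      eventually_at_right_both_sides[of r "\<epsilon>/2"]
    by simp_all
  moreover have "\<forall>\<^sub>F x in at_right 0. 0 < x \<and> x < \<delta>"
    using assms(1) by (auto simp: eventually_at_right_field)
  ultimately have "\<forall>\<^sub>F x in at_right 0. 0 < x \<and> x < \<delta> \<and> \<bar>p x\<bar> < \<epsilon>/2 \<and> \<bar>p (-x)\<bar> < \<epsilon>/2 \<and>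
      \<bar>r x\<bar> < \<epsilon>/2 \<and> \<bar>r (-x)\<bar> < \<epsilon>/2"
    by eventually_elim auto
  then obtain x where x: "0 < x" "x < \<delta>" "\<bar>p x\<bar> < \<epsilon>/2" "\<bar>p (-x)\<bar> < \<epsilon>/2"
      "\<bar>r x\<bar> < \<epsilon>/2" "\<bar>r (-x)\<bar> < \<epsilon>/2"
    using eventually_happens'[OF trivial_limit_at_right_real] by blast
  have sub: "{-x..x} \<subseteq> {-\<delta><..<\<delta>}"
    using x by auto
  have "p ` {-x<..<x} = {p (-x)<..<p x}" "r ` {-x<..<x} = {r (-x)<..<r x}"
    using x(1) continuous_on_subset[OF assms(3) sub] continuous_on_subset[OF assms(4) sub]
      monotone_on_subset[OF p_mono sub] monotone_on_subset[OF r_mono sub]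
    by (simp_all add: continuous_strict_mono_on_image(1))
  moreover have "f ` p ` {-x<..<x} = g ` r ` {-x<..<x}"
    unfolding image_image using x(1,2) by (intro image_cong refl eq) auto
  moreover have "p (-x) < 0" "0 < p x" "r (-x) < 0" "0 < r x"
    using x(1,2) assms(5,6) strict_mono_onD[OF p_mono, of "-x" 0] strict_mono_onD[OF p_mono, of 0 x]
      strict_mono_onD[OF r_mono, of "-x" 0] strict_mono_onD[OF r_mono, of 0 x]
    by auto
  ultimately show "\<exists>a b c d. a < 0 \<and> 0 < b \<and> b - a < \<epsilon> \<and> c < 0 \<and> 0 < d \<and> d - c < \<epsilon> \<and>
      f ` {a<..<b} = g ` {c<..<d}"
    using x by (intro exI[of _ "p (-x)"] exI[of _ "p x"] exI[of _ "r (-x)"] exI[of _ "r x"]) auto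
qed

lemma reparam_image_eq_across_zero:
  fixes f g :: "real \<Rightarrow> 'a" and p r :: "real \<Rightarrow> real"
  assumes eq: "\<And>s. s \<in> {-\<delta><..<\<delta>} \<Longrightarrow> f (p s) = g (r s)"
    and p_cont: "continuous_on {-\<delta><..<\<delta>} p" and r_cont: "continuous_on {-\<delta><..<\<delta>} r"
    and "p 0 = 0" "r 0 = 0"
    and p_mono: "strict_mono_on {-\<delta><..<\<delta>} p"
    and r_right: "strict_mono_on {0..<\<delta>} r" and r_left: "strict_antimono_on {-\<delta><..0} r"
    and "0 < x" "x < \<delta>" "0 < y" "y < \<delta>" "r y = r (-x)"
  shows "f ` {0..<p y} = f ` {p (-x)<..0}"
proof -
  have sub: "{0..y} \<subseteq> {-\<delta><..<\<delta>}" "{-x..0} \<subseteq> {-\<delta><..<\<delta>}"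
    and sub_right: "{0..y} \<subseteq> {0..<\<delta>}" and sub_left: "{-x..0} \<subseteq> {-\<delta><..0}"
    using assms(9-12) by auto
  have image_eq: "f ` p ` S = g ` r ` S" if "S \<subseteq> {-\<delta><..<\<delta>}" for S
    unfolding image_image using that by (intro image_cong refl eq) auto
  have "f ` {0..<p y} = f ` p ` {0..<y}"
    using \<open>0 < y\<close> \<open>p 0 = 0\<close> continuous_strict_mono_on_image(3)[of 0 y p]
      continuous_on_subset[OF p_cont sub(1)] monotone_on_subset[OF p_mono sub(1)]
    by auto
  also have "\<dots> = g ` r ` {0..<y}"
    using \<open>0 < y\<close> \<open>y < \<delta>\<close> by (intro image_eq) auto
  also have "\<dots> = g ` {0..<r (-x)}"
    using \<open>0 < y\<close> \<open>r 0 = 0\<close> \<open>r y = r (-x)\<close> continuous_strict_mono_on_image(3)[of 0 y r]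
      continuous_on_subset[OF r_cont sub(1)] monotone_on_subset[OF r_right sub_right]
    by auto
  also have "\<dots> = g ` r ` {-x<..0}"
    using \<open>0 < x\<close> \<open>r 0 = 0\<close> continuous_strict_antimono_on_image[of "-x" 0 r]
      continuous_on_subset[OF r_cont sub(2)] monotone_on_subset[OF r_left sub_left]
    by auto
  also have "\<dots> = f ` p ` {-x<..0}"
    using \<open>0 < x\<close> \<open>x < \<delta>\<close> by (intro image_eq[symmetric]) auto
  also have "\<dots> = f ` {p (-x)<..0}"
    using \<open>0 < x\<close> \<open>p 0 = 0\<close> continuous_strict_mono_on_image(2)[of "-x" 0 p]
      continuous_on_subset[OF p_cont sub(2)] monotone_on_subset[OF p_mono sub(2)]
    by auto
  finally show ?thesis .
qed

lemma bounces_back_at_zero_real_reparam: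
  fixes f g :: "real \<Rightarrow> 'a" and p r :: "real \<Rightarrow> real"
  assumes "0 < \<delta>" and eq: "\<And>s. s \<in> {-\<delta><..<\<delta>} \<Longrightarrow> f (p s) = g (r s)"
    and p_cont: "continuous_on {-\<delta><..<\<delta>} p" and r_cont: "continuous_on {-\<delta><..<\<delta>} r"
    and "p 0 = 0" "r 0 = 0"
    and p_mono: "strict_mono_on {-\<delta><..<\<delta>} p"
    and r_right: "strict_mono_on {0..<\<delta>} r" and r_left: "strict_antimono_on {-\<delta><..0} r"
  shows "bounces_back_at_zero_real f"
  unfolding bounces_back_at_zero_real_def
proof (intro allI impI)
  fix \<epsilon> :: real assume "0 < \<epsilon>"
  note same_arc = reparam_image_eq_across_zero[where f = f and g = g and p = p and r = r,
      OF eq p_cont r_cont \<open>p 0 = 0\<close> \<open>r 0 = 0\<close> p_mono r_right r_left]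
  have "isCont p 0"
    using assms(1) p_cont by (simp add: continuous_on_eq_continuous_at)
  then have "\<forall>\<^sub>F x in at_right 0. \<bar>p x\<bar> < \<epsilon>/2 \<and> \<bar>p (-x)\<bar> < \<epsilon>/2"
    using \<open>p 0 = 0\<close> \<open>0 < \<epsilon>\<close> eventually_at_right_both_sides[of p "\<epsilon>/2"] by simp
  moreover have "\<forall>\<^sub>F x in at_right 0. 0 < x \<and> x < \<delta>"
    using assms(1) by (auto simp: eventually_at_right_field)
  ultimately obtain x0 where x0: "0 < x0" "x0 < \<delta>" "\<bar>p x0\<bar> < \<epsilon>/2" "\<bar>p (-x0)\<bar> < \<epsilon>/2"
    using eventually_happens'[OF trivial_limit_at_right_real] eventually_conj by blast
  have r_pos: "0 < r x0" "0 < r (-x0)"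
    using x0(1,2) \<open>r 0 = 0\<close> strict_mono_onD[OF r_right, of 0 x0] monotone_onD[OF r_left, of "-x0" 0]
    by auto
  have r_cont': "continuous_on {-x0..x0} r"
    using x0(1,2) by (auto intro: continuous_on_subset[OF r_cont])
  have p_le: "p s \<le> p t" if "-x0 \<le> s" "s \<le> t" "t \<le> x0" for s t
    using that x0(1,2) strict_mono_on_leD[OF p_mono, of s t] by auto
  show "\<exists>a b. a < 0 \<and> 0 < b \<and> b - a < \<epsilon> \<and> f ` {0..<b} = f ` {a<..0}"
  proof (cases "r (-x0) \<le> r x0")
    case True
    then obtain y where y: "0 \<le> y" "y \<le> x0" "r y = r (-x0)"
      using IVT'[of r 0 "r (-x0)" x0] r_pos x0(1) \<open>r 0 = 0\<close>
        continuous_on_subset[OF r_cont', of "{0..x0}"] by auto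
    then have "0 < y"
      using r_pos \<open>r 0 = 0\<close> by (metis order.not_eq_order_implies_strict)
    then have "0 < p y" "p (-x0) < 0"
      using x0(1,2) y(2) \<open>p 0 = 0\<close> strict_mono_onD[OF p_mono, of 0 y] strict_mono_onD[OF p_mono, of "-x0" 0]
      by auto
    then show ?thesis
      using same_arc[of x0 y] x0 y p_le[of y x0] \<open>0 < y\<close>
      by (intro exI[of _ "p (-x0)"] exI[of _ "p y"]) auto
  next
    case False
    then obtain x where x: "-x0 \<le> x" "x \<le> 0" "r x = r x0"
      using IVT2'[of r 0 "r x0" "-x0"] r_pos x0(1) \<open>r 0 = 0\<close>
        continuous_on_subset[OF r_cont', of "{-x0..0}"] by auto
    then have "x < 0"
      using r_pos \<open>r 0 = 0\<close> by (metis order.not_eq_order_implies_strict)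
    then have "p x < 0" "0 < p x0"
      using x0(1,2) x(1) \<open>p 0 = 0\<close> strict_mono_onD[OF p_mono, of x 0] strict_mono_onD[OF p_mono, of 0 x0]
      by auto
    then show ?thesis
      using same_arc[of "-x" x0] x0 x p_le[of "-x0" x] \<open>x < 0\<close>
      by (intro exI[of _ "p x"] exI[of _ "p x0"]) auto
  qed
qed

lemma share_curve_or_bounce_back_real:
  fixes f g :: "real \<Rightarrow> 'a" and p r :: "real \<Rightarrow> real"
  assumes "0 < \<delta>" and "\<And>s. s \<in> {-\<delta><..<\<delta>} \<Longrightarrow> f (p s) = g (r s)"
    and "continuous_on {-\<delta><..<\<delta>} p" "continuous_on {-\<delta><..<\<delta>} r" "p 0 = 0" "r 0 = 0"
    and "strict_mono_on {-\<delta><..<\<delta>} p" "strict_mono_on {0..<\<delta>} r"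
    and "strict_mono_on {-\<delta><..0} r \<or> strict_antimono_on {-\<delta><..0} r"
  shows "share_curve_around_zero_real f g \<or> bounces_back_at_zero_real f"
  using assms(9)
proof
  assume "strict_mono_on {-\<delta><..0} r"
  then have "strict_mono_on {-\<delta><..<\<delta>} r"
    using strict_mono_on_join assms(8) by blast
  then show ?thesis
    using share_curve_around_zero_real_reparam[where f = f and g = g and p = p and r = r, OF assms(1-7)] by blast
next
  assume "strict_antimono_on {-\<delta><..0} r"
  then show ?thesis
    using bounces_back_at_zero_real_reparam[where f = f and g = g and p = p and r = r, OF assms(1-8)] by blast
qed

section \<open>Local normal forms of holomorphic functions\<close>

lemma holomorphic_factor_at_zero:
  fixes F :: "complex \<Rightarrow> complex"
  assumes hol: "F holomorphic_on ball 0 r" and nonconst: "\<not> F constant_on ball 0 r"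
  obtains n \<rho> A where "0 < n" "0 < \<rho>" "A holomorphic_on ball 0 \<rho>"
    "\<And>z. z \<in> ball 0 \<rho> \<Longrightarrow> A z \<noteq> 0" "\<And>z. z \<in> ball 0 \<rho> \<Longrightarrow> F z = F 0 + z ^ n * A z"
proof -
  have "0 < r"
    using nonconst by (metis ball_eq_empty constant_on_def empty_iff not_less)
  have "(\<lambda>z. F z - F 0) holomorphic_on ball 0 r"
    using hol by (intro holomorphic_intros)
  moreover have "0 \<in> ball (0::complex) r"
    using \<open>0 < r\<close> by simp
  moreover have "F 0 - F 0 = 0"
    by simp
  moreover have "\<not> (\<lambda>z. F z - F 0) constant_on ball 0 r"
    using nonconst by (auto simp: constant_on_def diff_eq_eq)
  ultimately show thesis
  proof (rule holomorphic_factor_zero_nonconstant[OF _ open_ball connected_ball])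
    fix A \<rho> n
    assume A: "0 < n" "0 < \<rho>" "A holomorphic_on ball 0 \<rho>" "\<And>w. w \<in> ball 0 \<rho> \<Longrightarrow> A w \<noteq> 0"
      and eq: "\<And>w. w \<in> ball 0 \<rho> \<Longrightarrow> F w - F 0 = (w - 0) ^ n * A w"
    have "F z = F 0 + z ^ n * A z" if "z \<in> ball 0 \<rho>" for z
      using eq[OF that] by (simp add: algebra_simps)
    with A show thesis
      by (rule that)
  qed
qed

lemma nonconstant_analytic_factor_at_zero:
  fixes F :: "complex \<Rightarrow> complex"
  assumes "\<exists>r>0. F analytic_on ball 0 r \<and> \<not> (\<exists>c. \<forall>z\<in>ball 0 r. F z = c)"
  obtains n \<rho> A where "0 < n" "0 < \<rho>" "A holomorphic_on ball 0 \<rho>"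
    "\<And>z. z \<in> ball 0 \<rho> \<Longrightarrow> A z \<noteq> 0" "\<And>z. z \<in> ball 0 \<rho> \<Longrightarrow> F z = F 0 + z ^ n * A z"
    and "isCont F 0"
proof -
  obtain r where "0 < r" "F holomorphic_on ball 0 r" "\<not> F constant_on ball 0 r"
    using assms by (auto simp: analytic_on_open constant_on_def)
  moreover have "isCont F 0"
    using holomorphic_on_imp_continuous_on[OF \<open>F holomorphic_on ball 0 r\<close>] \<open>0 < r\<close>
    by (simp add: continuous_on_eq_continuous_at)
  ultimately show thesis
    using holomorphic_factor_at_zero that by metis
qed

lemma holomorphic_nth_root:
  fixes f :: "complex \<Rightarrow> complex"
  assumes "f holomorphic_on S" "contractible S" "\<And>z. z \<in> S \<Longrightarrow> f z \<noteq> 0" "0 < n"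
  obtains g where "g holomorphic_on S" "\<And>z. z \<in> S \<Longrightarrow> g z ^ n = f z"
proof -
  obtain L where L: "L holomorphic_on S" "\<And>z. z \<in> S \<Longrightarrow> f z = exp (L z)"
    using contractible_imp_holomorphic_log[OF assms(1-3)] by blast
  show thesis
  proof
    show "(\<lambda>z. exp (L z / of_nat n)) holomorphic_on S"
      using assms(4) by (intro holomorphic_intros L(1)) auto
    show "exp (L z / of_nat n) ^ n = f z" if "z \<in> S" for z
      using assms(4) L(2)[OF that] by (simp flip: exp_of_nat_mult)
  qed
qed

lemma has_complex_derivative_local_inverse:
  fixes f :: "complex \<Rightarrow> complex"
  assumes "f holomorphic_on S" "open S" "\<xi> \<in> S" "deriv f \<xi> \<noteq> 0"
  obtains r g where "0 < r" "ball \<xi> r \<subseteq> S" "open (f ` ball \<xi> r)"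
    "g holomorphic_on f ` ball \<xi> r" "\<And>z. z \<in> ball \<xi> r \<Longrightarrow> g (f z) = z"
proof -
  obtain r where r: "0 < r" "ball \<xi> r \<subseteq> S" "open (f ` ball \<xi> r)" "inj_on f (ball \<xi> r)"
    using has_complex_derivative_locally_invertible[OF assms(1,3,2,4)] by blast
  moreover obtain g where "g holomorphic_on f ` ball \<xi> r" "\<And>z. z \<in> ball \<xi> r \<Longrightarrow> g (f z) = z"
    using holomorphic_has_inverse[OF holomorphic_on_subset[OF assms(1) r(2)] open_ball r(4)] by metis
  ultimately show thesis
    using that by blast
qed

lemma holomorphic_power_normal_form:
  fixes B :: "complex \<Rightarrow> complex"
  assumes "B holomorphic_on ball 0 R" "\<And>z. z \<in> ball 0 R \<Longrightarrow> B z \<noteq> 0" "0 < R" "0 < m"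
  obtains h where "h holomorphic_on ball 0 R" "h 0 = 0" "deriv h 0 \<noteq> 0"
    "\<And>z. z \<in> ball 0 R \<Longrightarrow> z ^ m * B z = h z ^ m"
proof -
  obtain \<beta> where \<beta>: "\<beta> holomorphic_on ball 0 R" "\<And>z. z \<in> ball 0 R \<Longrightarrow> \<beta> z ^ m = B z"
    using holomorphic_nth_root[OF assms(1) convex_imp_contractible[OF convex_ball] assms(2,4)] by blast
  have "(\<beta> has_field_derivative deriv \<beta> 0) (at 0)"
    using holomorphic_derivI[OF \<beta>(1) open_ball, of 0] assms(3) by simp
  then have der: "((\<lambda>z. z * \<beta> z) has_field_derivative \<beta> 0) (at 0)"
    using DERIV_mult'[OF DERIV_ident] by fastforce
  have "\<beta> 0 ^ m \<noteq> 0"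
    using \<beta>(2)[of 0] assms(2)[of 0] assms(3) by simp
  then have "\<beta> 0 \<noteq> 0"
    using assms(4) by auto
  show thesis
  proof (rule that)
    show "(\<lambda>z. z * \<beta> z) holomorphic_on ball 0 R"
      using \<beta>(1) by (intro holomorphic_intros)
    show "deriv (\<lambda>z. z * \<beta> z) 0 \<noteq> 0"
      using DERIV_imp_deriv[OF der] \<open>\<beta> 0 \<noteq> 0\<close> by simp
    show "z ^ m * B z = (z * \<beta> z) ^ m" if "z \<in> ball 0 R" for z
      using \<beta>(2)[OF that] by (simp add: power_mult_distrib)
  qed simp
qed

lemma holomorphic_factor_power_substitution:
  fixes A F :: "complex \<Rightarrow> complex"
  assumes "A holomorphic_on ball 0 R" "\<And>z. z \<in> ball 0 R \<Longrightarrow> A z \<noteq> 0" "0 < R"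
    and F: "\<And>z. z \<in> ball 0 R \<Longrightarrow> F z = c + z ^ n * A z"
    and "0 < n" "0 < k" "0 < m" "n * k = m * q"
  obtains \<rho> p where "0 < \<rho>" "p holomorphic_on ball 0 \<rho>" "p 0 = 0"
    "\<And>z. z \<in> ball 0 \<rho> \<Longrightarrow> z \<noteq> 0 \<Longrightarrow> p z \<noteq> 0"
    "\<And>z. z \<in> ball 0 \<rho> \<Longrightarrow> F (z ^ k) = c + p z ^ m"
proof -
  define \<rho> where "\<rho> = min 1 R"
  have pow_in: "z ^ k \<in> ball 0 R" if "z \<in> ball 0 \<rho>" for z :: complex
  proof -
    have "norm z ^ k \<le> norm z ^ 1"
      using that \<open>0 < k\<close> by (intro power_decreasing) (auto simp: \<rho>_def)
    then show ?thesis
      using that by (auto simp: \<rho>_def norm_power)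
  qed
  have "(A \<circ> (\<lambda>z. z ^ k)) holomorphic_on ball 0 \<rho>"
    by (rule holomorphic_on_compose_gen[OF _ assms(1)]) (use pow_in in \<open>auto intro: holomorphic_intros\<close>)
  then have "(\<lambda>z. A (z ^ k)) holomorphic_on ball 0 \<rho>"
    by (simp add: o_def)
  moreover have "A (z ^ k) \<noteq> 0" if "z \<in> ball 0 \<rho>" for z
    using assms(2) pow_in[OF that] by blast
  ultimately obtain \<alpha> where \<alpha>: "\<alpha> holomorphic_on ball 0 \<rho>" "\<And>z. z \<in> ball 0 \<rho> \<Longrightarrow> \<alpha> z ^ m = A (z ^ k)"
    using holomorphic_nth_root[OF _ convex_imp_contractible[OF convex_ball] _ \<open>0 < m\<close>] by blast
  have "0 < m * q"
    using assms(5,6,8) by (metis mult_pos_pos)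
  then have "0 < q"
    by simp
  show thesis
  proof
    show "0 < \<rho>" "(\<lambda>z. z ^ q * \<alpha> z) holomorphic_on ball 0 \<rho>" "0 ^ q * \<alpha> 0 = 0"
      using \<open>0 < R\<close> \<open>0 < q\<close> \<alpha>(1) by (auto simp: \<rho>_def intro!: holomorphic_intros)
    show "z ^ q * \<alpha> z \<noteq> 0" if "z \<in> ball 0 \<rho>" "z \<noteq> 0" for z
    proof -
      have "\<alpha> z ^ m \<noteq> 0"
        using \<alpha>(2)[OF that(1)] assms(2)[OF pow_in[OF that(1)]] by simp
      then show ?thesis
        using that(2) \<open>0 < m\<close> by simp
    qed
    show "F (z ^ k) = c + (z ^ q * \<alpha> z) ^ m" if "z \<in> ball 0 \<rho>" for z
    proof -
      have "(z ^ k) ^ n = (z ^ q) ^ m"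
        unfolding power_mult[symmetric] using \<open>n * k = m * q\<close> by (simp add: mult.commute)
      then show ?thesis
        using F[OF pow_in[OF that]] \<alpha>(2)[OF that] by (simp add: power_mult_distrib)
    qed
  qed
qed

lemma frequently_root_of_unity_ratio:
  fixes x y :: "nat \<Rightarrow> complex"
  assumes "0 < m" and ev: "\<forall>\<^sub>F j in sequentially. x j ^ m = y j ^ m \<and> y j \<noteq> 0"
  obtains w where "w ^ m = 1" "\<exists>\<^sub>F j in sequentially. x j = w * y j"
proof -
  from ev have ev': "\<forall>\<^sub>F j in sequentially. \<exists>w\<in>{w. w ^ m = 1}. x j = w * y j"
  proof eventually_elim
    case (elim j)
    then have "(x j / y j) ^ m = 1" "x j = x j / y j * y j"
      by (simp_all add: power_divide)
    then show ?case
      by blast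
  qed
  have "finite {w::complex. w ^ m = 1}"
    using \<open>0 < m\<close> by (intro finite_roots_unity) simp
  from frequently_bex_finite[OF this eventually_frequently[OF sequentially_bot ev']]
  obtain w where "w \<in> {w. w ^ m = 1}" "\<exists>\<^sub>F j in sequentially. x j = w * y j"
    by blast
  then show thesis
    using that by simp
qed

lemma holomorphic_lift_of_power_relation:
  fixes p h :: "complex \<Rightarrow> complex" and a b :: "nat \<Rightarrow> complex"
  assumes p: "p holomorphic_on ball 0 \<rho>" "p 0 = 0" "0 < \<rho>"
    and h: "h holomorphic_on ball 0 R" "h 0 = 0" "deriv h 0 \<noteq> 0" "0 < R"
    and "0 < m" and a: "a \<longlonglongrightarrow> 0" and b: "b \<longlonglongrightarrow> 0"
    and rel: "\<forall>\<^sub>F j in sequentially. h (b j) ^ m = p (a j) ^ m \<and> p (a j) \<noteq> 0"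
  obtains \<delta> \<phi> where "0 < \<delta>" "\<delta> \<le> \<rho>" "\<phi> holomorphic_on ball 0 \<delta>" "\<phi> 0 = 0"
    "\<And>z. z \<in> ball 0 \<delta> \<Longrightarrow> \<phi> z \<in> ball 0 R \<and> h (\<phi> z) ^ m = p z ^ m"
    "\<exists>\<^sub>F j in sequentially. \<phi> (a j) = b j"
proof -
  have "0 \<in> ball (0::complex) R"
    using h(4) by simp
  then obtain r g where r: "0 < r" "ball (0::complex) r \<subseteq> ball 0 R" "open (h ` ball 0 r)"
      "g holomorphic_on h ` ball 0 r" "\<And>z. z \<in> ball 0 r \<Longrightarrow> g (h z) = z"
    using has_complex_derivative_local_inverse[OF h(1) open_ball _ h(3)] by blast
  define V where "V = h ` ball 0 r"
  have "h 0 \<in> h ` ball 0 r"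
    using r(1) by simp
  then have "0 \<in> V"
    using h(2) by (simp add: V_def)
  obtain w where "w ^ m = 1" and "\<exists>\<^sub>F j in sequentially. h (b j) = w * p (a j)"
    using frequently_root_of_unity_ratio[OF \<open>0 < m\<close> rel] .
  moreover have "\<forall>\<^sub>F j in sequentially. b j \<in> ball 0 r"
    using b r(1) by (intro topological_tendstoD) auto
  ultimately have w: "\<exists>\<^sub>F j in sequentially. h (b j) = w * p (a j) \<and> b j \<in> ball 0 r"
    by (intro frequently_eventually_frequently)
  have "continuous_on (ball 0 \<rho>) (\<lambda>z. w * p z)"
    using p(1) by (intro holomorphic_on_imp_continuous_on holomorphic_intros)
  then have "open (ball 0 \<rho> \<inter> (\<lambda>z. w * p z) -` V)"
    using r(3) unfolding V_def by (rule continuous_open_preimage[OF _ open_ball])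
  moreover have "0 \<in> ball 0 \<rho> \<inter> (\<lambda>z. w * p z) -` V"
    using p(2,3) \<open>0 \<in> V\<close> by simp
  ultimately obtain \<delta> where "0 < \<delta>" and \<delta>: "ball 0 \<delta> \<subseteq> ball 0 \<rho> \<inter> (\<lambda>z. w * p z) -` V"
    by (rule openE)
  define \<phi> where "\<phi> = (\<lambda>z. g (w * p z))"
  have \<phi>: "\<phi> z \<in> ball 0 r \<and> h (\<phi> z) = w * p z" if "z \<in> ball 0 \<delta>" for z
    using \<delta> that r(5) unfolding \<phi>_def V_def by force
  show thesis
  proof
    show "0 < \<delta>" "\<delta> \<le> \<rho>"
      using \<open>0 < \<delta>\<close> \<delta> by (auto simp: ball_subset_ball_iff)
    have "(g \<circ> (\<lambda>z. w * p z)) holomorphic_on ball 0 \<delta>"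
      using \<delta> r(4) holomorphic_on_subset[OF p(1)] unfolding V_def
      by (intro holomorphic_on_compose_gen holomorphic_intros) auto
    then show "\<phi> holomorphic_on ball 0 \<delta>"
      by (simp add: \<phi>_def o_def)
    show "\<phi> 0 = 0"
      using r(1) r(5)[of 0] h(2) p(2) by (simp add: \<phi>_def)
    show "\<phi> z \<in> ball 0 R \<and> h (\<phi> z) ^ m = p z ^ m" if "z \<in> ball 0 \<delta>" for z
    proof
      show "\<phi> z \<in> ball 0 R"
        using \<phi>[OF that] r(2) by auto
      show "h (\<phi> z) ^ m = p z ^ m"
        using \<phi>[OF that] \<open>w ^ m = 1\<close> by (simp add: power_mult_distrib)
    qed
    have "\<forall>\<^sub>F j in sequentially. a j \<in> ball 0 \<delta>"
      using a \<open>0 < \<delta>\<close> by (intro topological_tendstoD) auto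
    then have "\<forall>\<^sub>F j in sequentially. h (b j) = w * p (a j) \<and> b j \<in> ball 0 r \<longrightarrow> \<phi> (a j) = b j"
      unfolding \<phi>_def by eventually_elim (metis r(5))
    with w show "\<exists>\<^sub>F j in sequentially. \<phi> (a j) = b j"
      by (rule frequently_rev_mp)
  qed
qed

section \<open>Holomorphic functions that are real on the real axis\<close>

lemma frequently_filterlim:
  assumes "filterlim f F G" "\<exists>\<^sub>F x in G. P (f x)"
  shows "\<exists>\<^sub>F y in F. P y"
  using assms unfolding frequently_def filterlim_iff by blast

lemma islimpt_of_real_if_frequently_at_right:
  assumes "\<exists>\<^sub>F t in at_right 0. P t"
  shows "(0::complex) islimpt {complex_of_real t |t. 0 < t \<and> P t}"
  unfolding islimpt_approachable
proof (intro allI impI)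
  fix e :: real assume "0 < e"
  then have "\<forall>\<^sub>F t in at_right 0. 0 < t \<and> t < e"
    by (auto simp: eventually_at_right_field)
  with assms obtain t where "P t" "0 < t" "t < e"
    using frequently_eventually_frequently frequently_ex by blast
  then show "\<exists>x\<in>{complex_of_real t |t. 0 < t \<and> P t}. x \<noteq> 0 \<and> dist x 0 < e"
    by (intro bexI[of _ "of_real t"]) auto
qed

lemma holomorphic_real_on_real_axis:
  fixes f :: "complex \<Rightarrow> complex"
  assumes f: "f holomorphic_on ball 0 r" and U: "U \<subseteq> ball 0 r" "0 islimpt U"
    and real: "\<And>z. z \<in> U \<Longrightarrow> z \<in> \<real> \<and> f z \<in> \<real>"
    and z: "z \<in> ball 0 r" "z \<in> \<real>"
  shows "f z \<in> \<real>"
proof -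
  have "cnj ` ball 0 r = ball 0 r"
  proof (intro equalityI subsetI)
    fix x assume "x \<in> ball (0::complex) r"
    then have "cnj x \<in> ball 0 r" "x = cnj (cnj x)"
      by (simp_all add: complex_mod_cnj)
    then show "x \<in> cnj ` ball 0 r"
      by blast
  qed (auto simp: complex_mod_cnj)
  then have "(cnj \<circ> f \<circ> cnj) holomorphic_on ball 0 r"
    using f by (intro holomorphic_on_compose_cnj_cnj) auto
  then have "(\<lambda>z. f z - cnj (f (cnj z))) holomorphic_on ball 0 r"
    using f by (auto simp: o_def intro: holomorphic_on_diff)
  moreover have "0 \<in> ball (0::complex) r"
    using z(1) by (metis ball_eq_empty centre_in_ball empty_iff not_less)
  ultimately have "f z - cnj (f (cnj z)) = 0"
    by (rule analytic_continuation[OF _ open_ball connected_ball U(1) _ U(2) _ z(1)])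
       (use real in \<open>auto simp: Reals_cnj_iff\<close>)
  then show ?thesis
    using z(2) by (simp add: Reals_cnj_iff)
qed

lemma real_axis_restriction_has_derivative:
  fixes f :: "complex \<Rightarrow> complex"
  assumes f: "f holomorphic_on ball 0 r" and real: "\<And>t. \<bar>t\<bar> < r \<Longrightarrow> f (of_real t) \<in> \<real>"
    and t: "\<bar>t\<bar> < r"
  shows "((\<lambda>t. Re (f (of_real t))) has_real_derivative Re (deriv f (of_real t))) (at t)"
    and "deriv f (of_real t) \<in> \<real>"
proof -
  have "(f has_field_derivative deriv f (of_real t)) (at (of_real t))"
    using holomorphic_derivI[OF f open_ball, of "of_real t"] t by simp
  then have vd: "((\<lambda>x. f (of_real x)) has_vector_derivative deriv f (of_real t)) (at t)"
    by (rule has_vector_derivative_real_field)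
  show "((\<lambda>t. Re (f (of_real t))) has_real_derivative Re (deriv f (of_real t))) (at t)"
    using has_field_derivative_Re[OF vd] by simp
  have "((\<lambda>x. Im (f (of_real x))) has_real_derivative Im (deriv f (of_real t))) (at t)"
    using has_field_derivative_Im[OF vd] by simp
  moreover have "((\<lambda>x. Im (f (of_real x))) has_real_derivative 0) (at t)"
  proof (rule has_field_derivative_transform_within_open[of "\<lambda>x. 0" 0 t "{-r<..<r}"])
    show "0 = Im (f (of_real x))" if "x \<in> {-r<..<r}" for x
      using real[of x] that by (auto simp: complex_is_Real_iff)
  qed (use t in auto)
  ultimately show "deriv f (of_real t) \<in> \<real>"
    by (simp add: complex_is_Real_iff DERIV_unique)
qed

lemma eventually_deriv_nonzero:
  fixes f :: "complex \<Rightarrow> complex"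
  assumes "f holomorphic_on S" "open S" "connected S" "\<xi> \<in> S" "\<not> f constant_on S"
  shows "\<forall>\<^sub>F z in at \<xi>. deriv f z \<noteq> 0"
proof -
  obtain \<beta> where "\<beta> \<in> S" "deriv f \<beta> \<noteq> 0"
    using has_field_derivative_0_imp_constant_on[OF _ assms(3,2)] holomorphic_derivI[OF assms(1,2)]
      assms(5) by fastforce
  then show ?thesis
    using non_zero_neighbour_alt[OF holomorphic_deriv[OF assms(1,2)] assms(2-4)] eventually_mono
    by fastforce
qed

lemma real_axis_restriction_strictly_monotone:
  fixes f :: "complex \<Rightarrow> complex"
  defines "g \<equiv> \<lambda>t. Re (f (of_real t))"
  assumes f: "f holomorphic_on ball 0 r" and real: "\<And>t. \<bar>t\<bar> < r \<Longrightarrow> f (of_real t) \<in> \<real>"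
    and nonconst: "\<not> f constant_on ball 0 r"
  obtains \<delta> where "0 < \<delta>" "\<delta> \<le> r" "continuous_on {-\<delta><..<\<delta>} g"
    "strict_mono_on {0..<\<delta>} g \<or> strict_antimono_on {0..<\<delta>} g"
    "strict_mono_on {-\<delta><..0} g \<or> strict_antimono_on {-\<delta><..0} g"
proof -
  have "0 < r"
    using nonconst by (metis ball_eq_empty constant_on_def empty_iff not_less)
  then obtain d where "0 < d" and d: "\<And>z. z \<noteq> 0 \<Longrightarrow> dist z 0 < d \<Longrightarrow> deriv f z \<noteq> 0"
    using eventually_deriv_nonzero[OF f open_ball connected_ball _ nonconst] unfolding eventually_at
    by force
  define \<delta> where "\<delta> = min d r"
  have der: "(g has_real_derivative Re (deriv f (of_real t))) (at t)" if "\<bar>t\<bar> < \<delta>" for t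
    unfolding g_def using real_axis_restriction_has_derivative(1)[OF f real] that by (simp add: \<delta>_def)
  have nonzero: "Re (deriv f (of_real t)) \<noteq> 0" if "t \<noteq> 0" "\<bar>t\<bar> < \<delta>" for t
    using d[of "of_real t"] real_axis_restriction_has_derivative(2)[OF f real, of t] that
    by (auto simp: \<delta>_def complex_is_Real_iff complex_eq_iff)
  have cont: "continuous_on {-\<delta><..<\<delta>} g"
    using DERIV_isCont[OF der] by (auto intro!: continuous_at_imp_continuous_on)
  have "strict_mono_on S g \<or> strict_antimono_on S g" if "S \<in> {{0..<\<delta>}, {-\<delta><..0}}" for S
  proof -
    have S: "is_interval S" "S \<subseteq> {-\<delta><..<\<delta>}" "interior S \<subseteq> {-\<delta><..<\<delta>} - {0}"
      using that by auto
    then have "inj_on g S"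
      using der nonzero
      by (intro inj_on_if_deriv_nonzero[where f' = "\<lambda>t. Re (deriv f (of_real t))"] continuous_on_subset[OF cont]) (auto simp: subset_iff)
    then show ?thesis
      using injective_eq_monotone_map[OF S(1) continuous_on_subset[OF cont S(2)]] by blast
  qed
  then show thesis
    using that[of \<delta>] cont \<open>0 < d\<close> \<open>0 < r\<close> by (auto simp: \<delta>_def)
qed

section \<open>Curves related through a holomorphic reparametrisation\<close>

lemma roughly_agree_right_commute:
  "roughly_agree_right F G \<Longrightarrow> roughly_agree_right G F"
  unfolding roughly_agree_right_def by metis

lemma roughly_agree_right_imp_eq_at_zero:
  assumes "roughly_agree_right F G" "isCont F 0" "isCont G 0"
  shows "F 0 = G 0"
proof -
  obtain u v :: "nat \<Rightarrow> real" where "u \<longlonglongrightarrow> 0" "v \<longlonglongrightarrow> 0" and eq: "\<And>k. F (u k) = G (v k)"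
    using assms(1) unfolding roughly_agree_right_def by metis
  have "(\<lambda>k. complex_of_real (u k)) \<longlonglongrightarrow> 0" "(\<lambda>k. complex_of_real (v k)) \<longlonglongrightarrow> 0"
    using tendsto_of_real[OF \<open>u \<longlonglongrightarrow> 0\<close>] tendsto_of_real[OF \<open>v \<longlonglongrightarrow> 0\<close>] by simp_all
  then have "(\<lambda>k. F (of_real (u k))) \<longlonglongrightarrow> F 0" "(\<lambda>k. G (of_real (v k))) \<longlonglongrightarrow> G 0"
    using isCont_tendsto_compose[OF assms(2)] isCont_tendsto_compose[OF assms(3)] by blast+
  then have "(\<lambda>k. G (of_real (v k))) \<longlonglongrightarrow> F 0" "(\<lambda>k. G (of_real (v k))) \<longlonglongrightarrow> G 0"
    by (simp_all add: eq)
  then show ?thesis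
    by (rule LIMSEQ_unique)
qed

lemma odd_cofactor_cases:
  fixes n m :: nat
  assumes "0 < n"
  obtains k q where "odd k" "n * k = m * q" | k q where "odd k" "m * k = n * q"
proof -
  define d where "d = gcd n m"
  have n: "n = d * (n div d)" and m: "m = d * (m div d)"
    by (simp_all add: d_def)
  have "coprime (n div d) (m div d)"
    unfolding d_def using assms by (intro div_gcd_coprime) simp
  then have "odd (m div d) \<or> odd (n div d)"
    using coprime_common_divisor_nat[of "n div d" "m div d" 2] by auto
  moreover have "n * (m div d) = m * (n div d)"
    by (subst n, subst m) simp
  ultimately show thesis
    using that by metis
qed

lemma holomorphic_reparametrisation_if_factorised:
  fixes F G A B :: "complex \<Rightarrow> complex"
  assumes A: "A holomorphic_on ball 0 RA" "\<And>z. z \<in> ball 0 RA \<Longrightarrow> A z \<noteq> 0" "0 < RA"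
    and F: "\<And>z. z \<in> ball 0 RA \<Longrightarrow> F z = c + z ^ n * A z"
    and B: "B holomorphic_on ball 0 RB" "\<And>z. z \<in> ball 0 RB \<Longrightarrow> B z \<noteq> 0" "0 < RB"
    and G: "\<And>z. z \<in> ball 0 RB \<Longrightarrow> G z = c + z ^ m * B z"
    and "0 < n" "0 < m" "0 < k" "n * k = m * q" and "roughly_agree_right F G"
  obtains \<delta> \<phi> where "0 < \<delta>" "\<phi> holomorphic_on ball 0 \<delta>" "\<phi> 0 = 0"
    "\<And>z. z \<in> ball 0 \<delta> \<Longrightarrow> F (z ^ k) = G (\<phi> z)"
    "\<exists>\<^sub>F t in at_right 0. \<phi> (of_real t) \<in> \<real> \<and> 0 < Re (\<phi> (of_real t))"
proof -
  obtain h where h: "h holomorphic_on ball 0 RB" "h 0 = 0" "deriv h 0 \<noteq> 0"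
      "\<And>z. z \<in> ball 0 RB \<Longrightarrow> z ^ m * B z = h z ^ m"
    using holomorphic_power_normal_form[OF B \<open>0 < m\<close>] by blast
  obtain \<rho> p where p: "0 < \<rho>" "p holomorphic_on ball 0 \<rho>" "p 0 = 0"
      "\<And>z. z \<in> ball 0 \<rho> \<Longrightarrow> z \<noteq> 0 \<Longrightarrow> p z \<noteq> 0" "\<And>z. z \<in> ball 0 \<rho> \<Longrightarrow> F (z ^ k) = c + p z ^ m"
    using holomorphic_factor_power_substitution[OF A F \<open>0 < n\<close> \<open>0 < k\<close> \<open>0 < m\<close> \<open>n * k = m * q\<close>] by blast
  obtain u v :: "nat \<Rightarrow> real" where uv: "\<And>j. 0 < u j" "\<And>j. 0 < v j" "u \<longlonglongrightarrow> 0" "v \<longlonglongrightarrow> 0"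
      "\<And>j. F (u j) = G (v j)"
    using \<open>roughly_agree_right F G\<close> unfolding roughly_agree_right_def by metis
  define s where "s = (\<lambda>j. root k (u j))"
  have s: "0 < s j" "s j ^ k = u j" for j
    using uv(1) \<open>0 < k\<close> by (simp_all add: s_def real_root_gt_zero real_root_pow_pos)
  have "s \<longlonglongrightarrow> 0"
    using tendsto_real_root[OF uv(3), of k] by (simp add: s_def)
  then have "\<forall>\<^sub>F j in sequentially. s j < \<rho> \<and> v j < RB"
    using order_tendstoD(2)[OF _ p(1)] order_tendstoD(2)[OF uv(4) B(3)] eventually_conj by blast
  then have rel: "\<forall>\<^sub>F j in sequentially. h (of_real (v j)) ^ m = p (of_real (s j)) ^ m \<and> p (of_real (s j)) \<noteq> 0"
  proof eventually_elim
    case (elim j)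
    have "complex_of_real (u j) = of_real (s j) ^ k"
      using s(2)[of j] by (metis of_real_power)
    then have "c + h (of_real (v j)) ^ m = c + p (of_real (s j)) ^ m"
      using G[of "of_real (v j)"] h(4)[of "of_real (v j)"] p(5)[of "of_real (s j)"] uv(2,5)[of j] s(1)[of j] elim
      by (simp add: abs_of_pos)
    then show ?case
      using p(4)[of "of_real (s j)"] s(1)[of j] elim by (simp add: abs_of_pos)
  qed
  have lim: "(\<lambda>j. complex_of_real (s j)) \<longlonglongrightarrow> 0" "(\<lambda>j. complex_of_real (v j)) \<longlonglongrightarrow> 0"
    using tendsto_of_real[OF \<open>s \<longlonglongrightarrow> 0\<close>] tendsto_of_real[OF uv(4)] by simp_all
  obtain \<delta> \<phi> where \<phi>: "0 < \<delta>" "\<delta> \<le> \<rho>" "\<phi> holomorphic_on ball 0 \<delta>" "\<phi> 0 = 0"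
      "\<And>z. z \<in> ball 0 \<delta> \<Longrightarrow> \<phi> z \<in> ball 0 RB \<and> h (\<phi> z) ^ m = p z ^ m"
      "\<exists>\<^sub>F j in sequentially. \<phi> (of_real (s j)) = of_real (v j)"
    using holomorphic_lift_of_power_relation[OF p(2,3,1) h(1-3) B(3) \<open>0 < m\<close> lim rel] by blast
  show thesis
  proof
    show "F (z ^ k) = G (\<phi> z)" if "z \<in> ball 0 \<delta>" for z
      using p(5)[of z] G[of "\<phi> z"] h(4)[of "\<phi> z"] \<phi>(2) \<phi>(5)[OF that] that by auto
    have "filterlim s (at_right 0) sequentially"
      using \<open>s \<longlonglongrightarrow> 0\<close> s(1) by (intro tendsto_imp_filterlim_at_right) auto
    moreover have "\<exists>\<^sub>F j in sequentially. \<phi> (of_real (s j)) \<in> \<real> \<and> 0 < Re (\<phi> (of_real (s j)))"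
      using \<phi>(6) by (rule frequently_elim1) (use uv(2) in auto)
    ultimately show "\<exists>\<^sub>F t in at_right 0. \<phi> (of_real t) \<in> \<real> \<and> 0 < Re (\<phi> (of_real t))"
      by (rule frequently_filterlim)
  qed (use \<phi> in auto)
qed

lemma share_curve_or_bounce_back_if_holomorphic_reparam:
  fixes F G \<phi> :: "complex \<Rightarrow> complex"
  assumes "0 < \<delta>" and hol: "\<phi> holomorphic_on ball 0 \<delta>" and "\<phi> 0 = 0"
    and eq: "\<And>z. z \<in> ball 0 \<delta> \<Longrightarrow> F (z ^ k) = G (\<phi> z)" and "odd k"
    and pos: "\<exists>\<^sub>F t in at_right 0. \<phi> (of_real t) \<in> \<real> \<and> 0 < Re (\<phi> (of_real t))"
  shows "share_curve_around_zero F G \<or> bounces_back_at_zero F"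
proof -
  define r where "r = (\<lambda>t. Re (\<phi> (of_real t)))"
  have small_pos: "\<exists>\<^sub>F t in at_right 0. (0 < t \<and> t < d) \<and> \<phi> (of_real t) \<in> \<real> \<and> 0 < r t"
    if "0 < d" for d
  proof -
    have "\<forall>\<^sub>F t in at_right 0. 0 < t \<and> t < d"
      using that by (auto simp: eventually_at_right_field)
    from frequently_eventually_conj[OF pos this] show ?thesis
      by (simp add: r_def)
  qed
  have real: "\<phi> (of_real t) \<in> \<real>" if "\<bar>t\<bar> < \<delta>" for t
  proof (rule holomorphic_real_on_real_axis[OF hol])
    have "\<exists>\<^sub>F t in at_right 0. t < \<delta> \<and> \<phi> (of_real t) \<in> \<real>"
      using small_pos[OF \<open>0 < \<delta>\<close>] by (rule frequently_elim1) auto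
    then show "0 islimpt {complex_of_real t |t. 0 < t \<and> t < \<delta> \<and> \<phi> (of_real t) \<in> \<real>}"
      by (rule islimpt_of_real_if_frequently_at_right)
  qed (use that in auto)
  obtain t where t: "0 < t" "t < \<delta>" "0 < r t"
    using frequently_ex[OF small_pos[OF \<open>0 < \<delta>\<close>]] by blast
  then have "complex_of_real t \<in> ball 0 \<delta>" "0 \<in> ball (0::complex) \<delta>" "\<phi> (of_real t) \<noteq> \<phi> 0"
    using \<open>\<phi> 0 = 0\<close> by (auto simp: r_def)
  then have "\<not> \<phi> constant_on ball 0 \<delta>"
    unfolding constant_on_def by metis
  then obtain \<delta>' where \<delta>': "0 < \<delta>'" "\<delta>' \<le> \<delta>" "continuous_on {-\<delta>'<..<\<delta>'} r"
      "strict_mono_on {0..<\<delta>'} r \<or> strict_antimono_on {0..<\<delta>'} r"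
      "strict_mono_on {-\<delta>'<..0} r \<or> strict_antimono_on {-\<delta>'<..0} r"
    using real_axis_restriction_strictly_monotone[OF hol real] unfolding r_def by blast
  have "r 0 = 0"
    using \<open>\<phi> 0 = 0\<close> by (simp add: r_def)
  have right: "strict_mono_on {0..<\<delta>'} r"
  proof -
    obtain t where "0 < t" "t < \<delta>'" "0 < r t"
      using frequently_ex[OF small_pos[OF \<open>0 < \<delta>'\<close>]] by blast
    then show ?thesis
      using \<delta>'(4) \<open>r 0 = 0\<close> monotone_onD[of "{0..<\<delta>'}" "(<)" "\<lambda>x y. y < x" r 0 t] by auto
  qed
  have curve_eq: "F (of_real (t ^ k)) = G (of_real (r t))" if "t \<in> {-\<delta>'<..<\<delta>'}" for t
  proof -
    have "\<bar>t\<bar> < \<delta>"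
      using that \<delta>'(2) by auto
    then have "\<phi> (of_real t) = of_real (r t)"
      using real[of t] by (simp add: r_def)
    then show ?thesis
      using eq[of "of_real t"] \<open>\<bar>t\<bar> < \<delta>\<close> by simp
  qed
  have "strict_mono_on {-\<delta>'<..<\<delta>'} (\<lambda>t::real. t ^ k)"
    using strict_mono_odd_power[OF \<open>odd k\<close>] by (simp add: strict_mono_def monotone_on_def)
  moreover have "continuous_on {-\<delta>'<..<\<delta>'} (\<lambda>t::real. t ^ k)" "(0::real) ^ k = 0"
    using \<open>odd k\<close> by (auto intro: continuous_intros simp: odd_pos)
  ultimately have "share_curve_around_zero_real (\<lambda>t. F (of_real t)) (\<lambda>t. G (of_real t)) \<or>
      bounces_back_at_zero_real (\<lambda>t. F (of_real t))"
    using share_curve_or_bounce_back_real[where f = "\<lambda>t. F (of_real t)" and g = "\<lambda>t. G (of_real t)"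
        and p = "\<lambda>t. t ^ k" and r = r, OF \<delta>'(1) curve_eq _ \<delta>'(3) _ \<open>r 0 = 0\<close> _ right \<delta>'(5)]
    by blast
  then show ?thesis
    unfolding share_curve_around_zero_iff_real bounces_back_at_zero_iff_real .
qed

lemma share_curve_or_bounce_back_if_factorised:
  fixes F G A B :: "complex \<Rightarrow> complex"
  assumes "A holomorphic_on ball 0 RA" "\<And>z. z \<in> ball 0 RA \<Longrightarrow> A z \<noteq> 0" "0 < RA"
    and "\<And>z. z \<in> ball 0 RA \<Longrightarrow> F z = c + z ^ n * A z"
    and "B holomorphic_on ball 0 RB" "\<And>z. z \<in> ball 0 RB \<Longrightarrow> B z \<noteq> 0" "0 < RB"
    and "\<And>z. z \<in> ball 0 RB \<Longrightarrow> G z = c + z ^ m * B z"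
    and "0 < n" "0 < m" "odd k" "n * k = m * q" and "roughly_agree_right F G"
  shows "share_curve_around_zero F G \<or> bounces_back_at_zero F"
proof -
  have "0 < k"
    using \<open>odd k\<close> by (simp add: odd_pos)
  then obtain \<delta> \<phi> where "0 < \<delta>" "\<phi> holomorphic_on ball 0 \<delta>" "\<phi> 0 = 0"
      "\<And>z. z \<in> ball 0 \<delta> \<Longrightarrow> F (z ^ k) = G (\<phi> z)"
      "\<exists>\<^sub>F t in at_right 0. \<phi> (of_real t) \<in> \<real> \<and> 0 < Re (\<phi> (of_real t))"
    using holomorphic_reparametrisation_if_factorised[OF assms(1-10) _ assms(12,13)] by blast
  then show ?thesis
    using share_curve_or_bounce_back_if_holomorphic_reparam \<open>odd k\<close> by blast
qed

theorem lemma5: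
  fixes F G :: "complex \<Rightarrow> complex"
  assumes "\<exists>r>0. F analytic_on ball 0 r \<and> \<not> (\<exists>c. \<forall>z\<in>ball 0 r. F z = c)"
    and "\<exists>r>0. G analytic_on ball 0 r \<and> \<not> (\<exists>c. \<forall>z\<in>ball 0 r. G z = c)"
    and "\<not> bounces_back_at_zero F"
    and "\<not> bounces_back_at_zero G"
    and "roughly_agree_right F G"
  shows "share_curve_around_zero F G"
proof -
  obtain n RA A where A: "0 < n" "0 < RA" "A holomorphic_on ball 0 RA" "\<And>z. z \<in> ball 0 RA \<Longrightarrow> A z \<noteq> 0"
      "\<And>z. z \<in> ball 0 RA \<Longrightarrow> F z = F 0 + z ^ n * A z" "isCont F 0"
    using nonconstant_analytic_factor_at_zero[OF assms(1)] by metis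
  obtain m RB B where B: "0 < m" "0 < RB" "B holomorphic_on ball 0 RB" "\<And>z. z \<in> ball 0 RB \<Longrightarrow> B z \<noteq> 0"
      "\<And>z. z \<in> ball 0 RB \<Longrightarrow> G z = F 0 + z ^ m * B z"
    using nonconstant_analytic_factor_at_zero[OF assms(2)] roughly_agree_right_imp_eq_at_zero[OF assms(5) A(6)]
    by metis
  consider k q where "odd k" "n * k = m * q" | k q where "odd k" "m * k = n * q"
    by (rule odd_cofactor_cases[OF A(1)])
  then show ?thesis
  proof cases
    case 1
    then show ?thesis
      using share_curve_or_bounce_back_if_factorised[OF A(3,4,2,5) B(3,4,2,5) A(1) B(1) 1 assms(5)] assms(3)
      by blast
  next
    case 2
    then have "share_curve_around_zero G F \<or> bounces_back_at_zero G"
      using share_curve_or_bounce_back_if_factorised[OF B(3,4,2,5) A(3,4,2,5) B(1) A(1) 2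
          roughly_agree_right_commute[OF assms(5)]] by blast
    then show ?thesis
      using assms(4) share_curve_around_zero_commute by blast
  qed
qed

end
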